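(* Let $X$ be an $X$-set parameter and let $G$ be a graph with no isolated vertices. Then the automorphism group of $\mathscr{X}^{\rm TAR}(G)$ is generated by $\{\nu_R : R\subseteq V(G)\text{ is }X\text{-irrelevant}\}\cup M_X(G)$, where each $\psi\in M_X(G)$ is regarded as the map $S\mapsto\psi(S)=\{\psi(s):s\in S\}$ on $X$-sets.
   Context: All graphs are simple, finite, with nonempty vertex set. An $X$-set parameter is a graph parameter $X(G)$ defined as the minimum cardinality of an $X$-set of $G$, where the $X$-sets of each graph are subsets of its vertex set determined by some property satisfying: (1) supersets (within $V(G)$) of $X$-sets are $X$-sets; (2) the empty set is never an $X$-set; (3) an $X$-set of a disconnected graph is the union of an $X$-set of each component; (4) if $G$ has no isolated vertices, every set of $|V(G)|-1$ vertices is an $X$-set. The $X$-TAR graph $\mathscr{X}^{\rm TAR}(G)$ has as vertices all $X$-sets of $G$, with $S_1,S_2$ adjacent iff $|S_1\ominus S_2|=1$ (symmetric difference). A vertex $v$ is $X$-irrelevant if $v\notin S$ for every minimal $X$-set $S$ of $G$; a set is $X$-irrelevant if all its vertices are. For $R\subseteq V(G)$, $\nu_R(S)=S\ominus R$. $M_X(G)$ is the set of bijections $\psi:V(G)\to V(G)$ that send minimal $X$-sets of $G$ to minimal $X$-sets of $G$ of the same size. *)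

theory Defs
  imports Main "HOL-Algebra.Bij" "HOL-Algebra.Generated_Groups"
begin

definition is_graph :: "'a set \<Rightarrow> ('a \<Rightarrow> 'a \<Rightarrow> bool) \<Rightarrow> bool" where
  "is_graph V E \<longleftrightarrow> finite V \<and> V \<noteq> {} \<and>
     (\<forall>u v. E u v \<longrightarrow> u \<in> V \<and> v \<in> V) \<and>
     (\<forall>u v. E u v \<longrightarrow> E v u) \<and> (\<forall>v. \<not> E v v)"

definition no_isolated :: "'a set \<Rightarrow> ('a \<Rightarrow> 'a \<Rightarrow> bool) \<Rightarrow> bool" where
  "no_isolated V E \<longleftrightarrow> (\<forall>v\<in>V. \<exists>u. E v u)"

definition induced :: "('a \<Rightarrow> 'a \<Rightarrow> bool) \<Rightarrow> 'a set \<Rightarrow> 'a \<Rightarrow> 'a \<Rightarrow> bool" where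
  "induced E C = (\<lambda>u v. E u v \<and> u \<in> C \<and> v \<in> C)"

definition component :: "'a set \<Rightarrow> ('a \<Rightarrow> 'a \<Rightarrow> bool) \<Rightarrow> 'a \<Rightarrow> 'a set" where
  "component V E v = {u \<in> V. (induced E V)\<^sup>*\<^sup>* v u}"

definition components :: "'a set \<Rightarrow> ('a \<Rightarrow> 'a \<Rightarrow> bool) \<Rightarrow> 'a set set" where
  "components V E = component V E ` V"

definition disconnected :: "'a set \<Rightarrow> ('a \<Rightarrow> 'a \<Rightarrow> bool) \<Rightarrow> bool" where
  "disconnected V E \<longleftrightarrow> (\<exists>C\<in>components V E. \<exists>D\<in>components V E. C \<noteq> D)"

definition X_set_property :: "('a set \<Rightarrow> ('a \<Rightarrow> 'a \<Rightarrow> bool) \<Rightarrow> 'a set set) \<Rightarrow> bool" where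
  "X_set_property Xs \<longleftrightarrow>
     (\<forall>V E. is_graph V E \<longrightarrow>
        (\<forall>S \<in> Xs V E. S \<subseteq> V) \<and>
        (\<forall>S T. S \<in> Xs V E \<longrightarrow> S \<subseteq> T \<longrightarrow> T \<subseteq> V \<longrightarrow> T \<in> Xs V E) \<and>
        {} \<notin> Xs V E \<and>
        (disconnected V E \<longrightarrow>
           (\<forall>S. S \<in> Xs V E \<longleftrightarrow>
                 (\<exists>f. (\<forall>C\<in>components V E. f C \<in> Xs C (induced E C))
                      \<and> S = (\<Union>C\<in>components V E. f C)))) \<and>
        (no_isolated V E \<longrightarrow> (\<forall>v\<in>V. V - {v} \<in> Xs V E)))"

definition sym_diff :: "'a set \<Rightarrow> 'a set \<Rightarrow> 'a set" (infixl "\<ominus>" 70) where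
  "A \<ominus> B = (A - B) \<union> (B - A)"

(* The X-TAR graph: vertex set Xs V E, adjacency |S1 \<ominus> S2| = 1 *)
definition TAR_adj :: "'a set \<Rightarrow> 'a set \<Rightarrow> bool" where
  "TAR_adj S1 S2 \<longleftrightarrow> card (S1 \<ominus> S2) = 1"

definition TAR_auts :: "'a set set \<Rightarrow> ('a set \<Rightarrow> 'a set) set" where
  "TAR_auts W = {f \<in> Bij W. \<forall>S1\<in>W. \<forall>S2\<in>W. TAR_adj (f S1) (f S2) \<longleftrightarrow> TAR_adj S1 S2}"

definition minimal_Xset :: "('a set \<Rightarrow> ('a \<Rightarrow> 'a \<Rightarrow> bool) \<Rightarrow> 'a set set) \<Rightarrow> 'a set \<Rightarrow> ('a \<Rightarrow> 'a \<Rightarrow> bool) \<Rightarrow> 'a set \<Rightarrow> bool" where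
  "minimal_Xset Xs V E S \<longleftrightarrow> S \<in> Xs V E \<and> (\<forall>T. T \<subset> S \<longrightarrow> T \<notin> Xs V E)"

definition X_irrelevant :: "('a set \<Rightarrow> ('a \<Rightarrow> 'a \<Rightarrow> bool) \<Rightarrow> 'a set set) \<Rightarrow> 'a set \<Rightarrow> ('a \<Rightarrow> 'a \<Rightarrow> bool) \<Rightarrow> 'a set \<Rightarrow> bool" where
  "X_irrelevant Xs V E R \<longleftrightarrow> R \<subseteq> V \<and> (\<forall>v\<in>R. \<forall>S. minimal_Xset Xs V E S \<longrightarrow> v \<notin> S)"

definition M_X :: "('a set \<Rightarrow> ('a \<Rightarrow> 'a \<Rightarrow> bool) \<Rightarrow> 'a set set) \<Rightarrow> 'a set \<Rightarrow> ('a \<Rightarrow> 'a \<Rightarrow> bool) \<Rightarrow> ('a \<Rightarrow> 'a) set" where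
  "M_X Xs V E = {\<psi>. bij_betw \<psi> V V \<and>
     (\<forall>S. minimal_Xset Xs V E S \<longrightarrow> minimal_Xset Xs V E (\<psi> ` S) \<and> card (\<psi> ` S) = card S)}"

definition TAR_generators :: "('a set \<Rightarrow> ('a \<Rightarrow> 'a \<Rightarrow> bool) \<Rightarrow> 'a set set) \<Rightarrow> 'a set \<Rightarrow> ('a \<Rightarrow> 'a \<Rightarrow> bool) \<Rightarrow> ('a set \<Rightarrow> 'a set) set" where
  "TAR_generators Xs V E =
     {(\<lambda>S\<in>Xs V E. S \<ominus> R) | R. X_irrelevant Xs V E R} \<union>
     {(\<lambda>S\<in>Xs V E. \<psi> ` S) | \<psi>. \<psi> \<in> M_X Xs V E}"

end

theory Submission
  imports Defs
begin

(* Since the X-sets form an up-closed family containing every V - {v}, two X-sets S and T are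
   joined in the TAR graph by a walk of length |S \<ominus> T| (adding or removing one element of
   S \<ominus> T at a time), so the graph distance is |S \<ominus> T| and automorphisms preserve it.
   For an automorphism f, the X-set f (V - {v}) is a neighbour of f V, say f V \<ominus> {\<psi> v};
   comparing the distances of f S to f V and to f (V - {v}) shows that \<psi> is a bijection of V
   with f S = \<psi>(S) \<ominus> R, where R = V - f V. If v \<in> R lay in a minimal X-set M = f X, then
   f (X \<union> {\<psi>\<inverse>(v)}) = M - {v} would be a smaller X-set; so R is X-irrelevant,
   \<psi>(S) = f S \<ominus> R is an X-set for every X-set S, and f = \<nu>\<^sub>R \<circ> \<psi>.
   Only the axioms (1) and (4) of X-set parameters are needed. *)

lemma mem_sym_diff_iff: "x \<in> A \<ominus> B \<longleftrightarrow> (x \<in> A) \<noteq> (x \<in> B)"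
  by (auto simp: sym_diff_def)

lemma sym_diff_assoc: "(A \<ominus> B) \<ominus> C = A \<ominus> (B \<ominus> C)"
  by (auto simp: sym_diff_def)

lemma sym_diff_cancel_right: "(A \<ominus> R) \<ominus> R = A"
  by (auto simp: sym_diff_def)

lemma sym_diff_cancel_common: "(A \<ominus> R) \<ominus> (B \<ominus> R) = A \<ominus> B"
  by (auto simp: sym_diff_def)

lemma image_sym_diff:
  assumes "inj_on f C" "A \<subseteq> C" "B \<subseteq> C"
  shows "f ` (A \<ominus> B) = f ` A \<ominus> f ` B"
  using inj_on_image_set_diff[OF assms(1)] assms(2,3) by (auto simp: sym_diff_def)

lemma inj_on_image_subset_iff:
  assumes "inj_on f C" "A \<subseteq> C" "B \<subseteq> C"
  shows "f ` A \<subseteq> f ` B \<longleftrightarrow> A \<subseteq> B"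
  using assms by (metis image_Un inj_on_image_eq_iff le_supI subset_Un_eq)

lemma inj_on_image_psubset_iff:
  assumes "inj_on f C" "A \<subseteq> C" "B \<subseteq> C"
  shows "f ` A \<subset> f ` B \<longleftrightarrow> A \<subset> B"
  using inj_on_image_subset_iff[OF assms] inj_on_image_eq_iff[OF assms] by auto

lemma card_sym_diff_triangle:
  assumes "finite (A \<ominus> B)" and "finite (B \<ominus> C)"
  shows "card (A \<ominus> C) \<le> card (A \<ominus> B) + card (B \<ominus> C)"
proof -
  have "card (A \<ominus> C) \<le> card ((A \<ominus> B) \<union> (B \<ominus> C))"
    using assms by (intro card_mono) (auto simp: sym_diff_def)
  also have "\<dots> \<le> card (A \<ominus> B) + card (B \<ominus> C)"
    by (rule card_Un_le)
  finally show ?thesis .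
qed

lemma card_sym_diff_singleton:
  "finite A \<Longrightarrow> card (A \<ominus> {a}) = (if a \<in> A then card A - 1 else Suc (card A))"
  by (cases "a \<in> A") (auto simp: sym_diff_def insert_absorb)

lemma mem_iff_mem_if_card_sym_diff_singleton_eq:
  assumes "finite A" "finite B" "card A = card B" "card (A \<ominus> {a}) = card (B \<ominus> {b})"
  shows "a \<in> A \<longleftrightarrow> b \<in> B"
  using assms card_sym_diff_singleton[of A a] card_sym_diff_singleton[of B b]
  by (auto split: if_splits)

lemma relpowp_map:
  assumes "\<And>x y. P x y \<Longrightarrow> Q (h x) (h y)"
  shows "(P ^^ n) x y \<Longrightarrow> (Q ^^ n) (h x) (h y)"
proof (induction n arbitrary: y)
  case 0
  then show ?case by simp
next
  case (Suc n)
  then show ?case by (auto intro: relpowp_Suc_I assms elim: relpowp_Suc_E)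
qed

definition TAR_edge :: "'a set set \<Rightarrow> 'a set \<Rightarrow> 'a set \<Rightarrow> bool" where
  "TAR_edge W S T \<longleftrightarrow> S \<in> W \<and> T \<in> W \<and> TAR_adj S T"

lemma TAR_adj_sym_diff_singleton: "TAR_adj S (S \<ominus> {x})"
proof -
  have "S \<ominus> (S \<ominus> {x}) = {x}"
    by (auto simp: sym_diff_def)
  then show ?thesis
    by (simp add: TAR_adj_def)
qed

lemma TAR_autsI:
  assumes "bij_betw g W W"
    and "\<And>S T. S \<in> W \<Longrightarrow> T \<in> W \<Longrightarrow> TAR_adj (g S) (g T) \<longleftrightarrow> TAR_adj S T"
  shows "(\<lambda>S\<in>W. g S) \<in> TAR_auts W"
  using assms by (simp add: TAR_auts_def Bij_def)

lemma TAR_auts_bij: "f \<in> TAR_auts W \<Longrightarrow> bij_betw f W W"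
  by (simp add: TAR_auts_def Bij_def)

lemma TAR_auts_mem: "f \<in> TAR_auts W \<Longrightarrow> S \<in> W \<Longrightarrow> f S \<in> W"
  by (rule bij_betw_apply[OF TAR_auts_bij])

lemma TAR_auts_adj_iff:
  "f \<in> TAR_auts W \<Longrightarrow> S \<in> W \<Longrightarrow> T \<in> W \<Longrightarrow> TAR_adj (f S) (f T) \<longleftrightarrow> TAR_adj S T"
  by (simp add: TAR_auts_def)

lemma TAR_auts_edge:
  assumes "f \<in> TAR_auts W" and "TAR_edge W S T"
  shows "TAR_edge W (f S) (f T)"
  using assms TAR_auts_adj_iff[OF assms(1)] TAR_auts_mem[OF assms(1)]
  by (auto simp: TAR_edge_def)

lemma TAR_auts_subgroup: "subgroup (TAR_auts W) (BijGroup W)"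
proof (rule group.subgroupI[OF group_BijGroup])
  show "TAR_auts W \<subseteq> carrier (BijGroup W)"
    by (auto simp: TAR_auts_def BijGroup_def)
  have "(\<lambda>S\<in>W. S) \<in> TAR_auts W"
    by (rule TAR_autsI) (auto simp: bij_betw_def)
  then show "TAR_auts W \<noteq> {}"
    by blast
next
  fix f assume f: "f \<in> TAR_auts W"
  have bij: "bij_betw f W W"
    by (rule TAR_auts_bij[OF f])
  have "(\<lambda>S\<in>W. inv_into W f S) \<in> TAR_auts W"
  proof (rule TAR_autsI)
    show "bij_betw (inv_into W f) W W"
      by (rule bij_betw_inv_into[OF bij])
    fix S T assume "S \<in> W" "T \<in> W"
    then show "TAR_adj (inv_into W f S) (inv_into W f T) \<longleftrightarrow> TAR_adj S T"
      using TAR_auts_adj_iff[OF f] bij_betw_apply[OF bij_betw_inv_into[OF bij]]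
        bij_betw_inv_into_right[OF bij] by metis
  qed
  then show "inv\<^bsub>BijGroup W\<^esub> f \<in> TAR_auts W"
    using f by (simp add: inv_BijGroup TAR_auts_def)
next
  fix f g assume f: "f \<in> TAR_auts W" and g: "g \<in> TAR_auts W"
  have "compose W f g \<in> Bij W"
    using f g by (intro compose_Bij) (auto simp: TAR_auts_def)
  moreover have "TAR_adj (compose W f g S) (compose W f g T) \<longleftrightarrow> TAR_adj S T"
    if "S \<in> W" "T \<in> W" for S T
    using that TAR_auts_adj_iff[OF f] TAR_auts_adj_iff[OF g] TAR_auts_mem[OF g]
    by (simp add: compose_eq)
  ultimately show "f \<otimes>\<^bsub>BijGroup W\<^esub> g \<in> TAR_auts W"
    using f g by (simp add: TAR_auts_def BijGroup_def)
qed

locale up_closed_family =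
  fixes V :: "'a set" and F :: "'a set set"
  assumes finite_V: "finite V"
    and family_subset: "S \<in> F \<Longrightarrow> S \<subseteq> V"
    and up_closed: "S \<in> F \<Longrightarrow> S \<subseteq> T \<Longrightarrow> T \<subseteq> V \<Longrightarrow> T \<in> F"
begin

definition minimal_set :: "'a set \<Rightarrow> bool" where
  "minimal_set M \<longleftrightarrow> M \<in> F \<and> (\<forall>T. T \<subset> M \<longrightarrow> T \<notin> F)"

definition irrelevant :: "'a set \<Rightarrow> bool" where
  "irrelevant R \<longleftrightarrow> R \<subseteq> V \<and> (\<forall>v\<in>R. \<forall>M. minimal_set M \<longrightarrow> v \<notin> M)"

lemma minimal_set_mem: "minimal_set M \<Longrightarrow> M \<in> F"
  by (simp add: minimal_set_def)

lemma finite_family: "finite F"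
  using finite_V family_subset by (meson PowI finite_Pow_iff finite_subset subsetI)

lemma finite_member: "S \<in> F \<Longrightarrow> finite S"
  using finite_V family_subset finite_subset by blast

lemma exists_minimal_subset:
  assumes "S \<in> F"
  shows "\<exists>M\<subseteq>S. minimal_set M"
  using finite_member[OF assms] assms
proof (induction S rule: finite_psubset_induct)
  case (psubset S)
  show ?case
  proof (cases "minimal_set S")
    case True
    then show ?thesis
      by blast
  next
    case False
    then obtain T where T: "T \<subset> S" "T \<in> F"
      using psubset.prems by (auto simp: minimal_set_def)
    then obtain M where "M \<subseteq> T" "minimal_set M"
      using psubset.IH by blast
    then show ?thesis
      using T(1) by (meson order.trans psubset_imp_subset)
  qed
qed

lemma sym_diff_irrelevant_mem:
  assumes R: "irrelevant R" and S: "S \<in> F"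
  shows "S \<ominus> R \<in> F"
proof -
  obtain M where M: "M \<subseteq> S" "minimal_set M"
    using exists_minimal_subset[OF S] by blast
  have "M \<inter> R = {}"
    using R M(2) by (auto simp: irrelevant_def)
  then have "M \<subseteq> S \<ominus> R"
    using M(1) by (auto simp: sym_diff_def)
  moreover have "S \<ominus> R \<subseteq> V"
    using family_subset[OF S] R by (auto simp: irrelevant_def sym_diff_def)
  moreover have "M \<in> F"
    using M(2) by (rule minimal_set_mem)
  ultimately show ?thesis
    using up_closed by blast
qed

lemma image_family_eq:
  assumes bij: "bij_betw \<psi> V V" and into: "\<And>S. S \<in> F \<Longrightarrow> \<psi> ` S \<in> F"
  shows "image \<psi> ` F = F"
proof (rule endo_inj_surj[OF finite_family])
  show "image \<psi> ` F \<subseteq> F"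
    using into by blast
  show "inj_on (image \<psi>) F"
    using family_subset
    by (intro inj_on_subset[OF inj_on_image_Pow[OF bij_betw_imp_inj_on[OF bij]]]) blast
qed

lemma minimal_set_image:
  assumes bij: "bij_betw \<psi> V V" and into: "\<And>S. S \<in> F \<Longrightarrow> \<psi> ` S \<in> F"
    and M: "minimal_set M"
  shows "minimal_set (\<psi> ` M)"
  unfolding minimal_set_def
proof (intro conjI allI impI)
  have MF: "M \<in> F"
    using M by (rule minimal_set_mem)
  then show "\<psi> ` M \<in> F"
    by (rule into)
  fix T assume T: "T \<subset> \<psi> ` M"
  show "T \<notin> F"
  proof
    assume "T \<in> F"
    then obtain T' where T': "T' \<in> F" "T = \<psi> ` T'"
      using image_family_eq[OF bij into] by blast
    have "T' \<subset> M"
      using T T' inj_on_image_psubset_iff[OF bij_betw_imp_inj_on[OF bij]]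
        family_subset[OF MF] family_subset[OF T'(1)] by simp
    then show False
      using M T'(1) by (simp add: minimal_set_def)
  qed
qed

lemma bij_preserves_minimal_iff:
  assumes bij: "bij_betw \<psi> V V"
  shows "(\<forall>M. minimal_set M \<longrightarrow> minimal_set (\<psi> ` M)) \<longleftrightarrow> (\<forall>S\<in>F. \<psi> ` S \<in> F)"
proof
  assume min: "\<forall>M. minimal_set M \<longrightarrow> minimal_set (\<psi> ` M)"
  show "\<forall>S\<in>F. \<psi> ` S \<in> F"
  proof
    fix S assume S: "S \<in> F"
    then obtain M where M: "M \<subseteq> S" "minimal_set M"
      using exists_minimal_subset by blast
    have "\<psi> ` M \<in> F"
      using min M(2) minimal_set_mem by blast
    moreover have "\<psi> ` S \<subseteq> V"
      using family_subset[OF S] bij_betw_imp_surj_on[OF bij] by blast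
    moreover have "\<psi> ` M \<subseteq> \<psi> ` S"
      using M(1) by (rule image_mono)
    ultimately show "\<psi> ` S \<in> F"
      using up_closed by blast
  qed
next
  assume "\<forall>S\<in>F. \<psi> ` S \<in> F"
  then show "\<forall>M. minimal_set M \<longrightarrow> minimal_set (\<psi> ` M)"
    using minimal_set_image[OF bij] by blast
qed

lemma sym_diff_aut:
  assumes "irrelevant R"
  shows "(\<lambda>S\<in>F. S \<ominus> R) \<in> TAR_auts F"
proof (rule TAR_autsI)
  show "bij_betw (\<lambda>S. S \<ominus> R) F F"
    using sym_diff_irrelevant_mem[OF assms]
    by (intro bij_betw_byWitness[where f'="\<lambda>S. S \<ominus> R"])
      (simp_all add: sym_diff_cancel_right image_subset_iff)
qed (simp add: TAR_adj_def sym_diff_cancel_common)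

lemma image_aut:
  assumes bij: "bij_betw \<psi> V V" and into: "\<And>S. S \<in> F \<Longrightarrow> \<psi> ` S \<in> F"
  shows "(\<lambda>S\<in>F. \<psi> ` S) \<in> TAR_auts F"
proof (rule TAR_autsI)
  have inj: "inj_on \<psi> V"
    using bij by (rule bij_betw_imp_inj_on)
  have "inj_on (image \<psi>) F"
    using family_subset by (intro inj_on_subset[OF inj_on_image_Pow[OF inj]]) blast
  then show "bij_betw (image \<psi>) F F"
    using image_family_eq[OF bij into] by (simp add: bij_betw_def)
  fix S T assume "S \<in> F" "T \<in> F"
  then have "S \<ominus> T \<subseteq> V" "\<psi> ` S \<ominus> \<psi> ` T = \<psi> ` (S \<ominus> T)"
    using family_subset image_sym_diff[OF inj] by (auto simp: sym_diff_def)
  then show "TAR_adj (\<psi> ` S) (\<psi> ` T) \<longleftrightarrow> TAR_adj S T"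
    using card_image[OF inj_on_subset[OF inj]] by (simp add: TAR_adj_def)
qed

lemma card_sym_diff_le_if_TAR_walk:
  assumes "(TAR_edge F ^^ n) S T" and "S \<in> F"
  shows "card (S \<ominus> T) \<le> n"
  using assms(1)
proof (induction n arbitrary: T)
  case 0
  then show ?case
    by (simp add: sym_diff_def)
next
  case (Suc n)
  then obtain U where walk: "(TAR_edge F ^^ n) S U" and edge: "TAR_edge F U T"
    by (auto elim: relpowp_Suc_E)
  then have "U \<in> F" "T \<in> F" "card (U \<ominus> T) = 1"
    by (auto simp: TAR_edge_def TAR_adj_def)
  then have "card (S \<ominus> T) \<le> card (S \<ominus> U) + card (U \<ominus> T)"
    using assms(2) finite_member by (intro card_sym_diff_triangle) (auto simp: sym_diff_def)
  then show ?case
    using Suc.IH[OF walk] \<open>card (U \<ominus> T) = 1\<close> by simp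
qed

lemma TAR_edge_towards:
  assumes S: "S \<in> F" and T: "T \<in> F" and "S \<noteq> T"
  shows "\<exists>x\<in>S \<ominus> T. TAR_edge F S (S \<ominus> {x})"
proof -
  obtain x where x: "x \<in> S \<ominus> T" and "S \<ominus> {x} \<in> F"
  proof (cases "T \<subseteq> S")
    case True
    then obtain x where x: "x \<in> S" "x \<notin> T"
      using \<open>S \<noteq> T\<close> by blast
    have "S \<ominus> {x} \<in> F"
      by (rule up_closed[OF T]) (use True x family_subset[OF S] in \<open>auto simp: sym_diff_def\<close>)
    moreover have "x \<in> S \<ominus> T"
      using x by (simp add: mem_sym_diff_iff)
    ultimately show thesis
      by (rule that[rotated])
  next
    case False
    then obtain x where x: "x \<in> T" "x \<notin> S"
      by blast
    have "S \<ominus> {x} \<in> F"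
      by (rule up_closed[OF S])
        (use x family_subset[OF S] family_subset[OF T] in \<open>auto simp: sym_diff_def\<close>)
    moreover have "x \<in> S \<ominus> T"
      using x by (simp add: mem_sym_diff_iff)
    ultimately show thesis
      by (rule that[rotated])
  qed
  moreover have "TAR_edge F S (S \<ominus> {x})"
    using S \<open>S \<ominus> {x} \<in> F\<close> TAR_adj_sym_diff_singleton by (simp add: TAR_edge_def)
  ultimately show ?thesis
    by blast
qed

lemma TAR_walk_sym_diff:
  assumes "S \<in> F" and "T \<in> F"
  shows "(TAR_edge F ^^ card (S \<ominus> T)) S T"
proof -
  have "(TAR_edge F ^^ n) S T" if "card (S \<ominus> T) = n" "S \<in> F" for n S
    using that
  proof (induction n arbitrary: S)
    case 0
    then have "S = T"
      using finite_member[OF \<open>S \<in> F\<close>] finite_member[OF \<open>T \<in> F\<close>]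
      by (auto simp: sym_diff_def)
    then show ?case
      by simp
  next
    case (Suc n)
    then have "S \<noteq> T"
      by (auto simp: sym_diff_def)
    then obtain x where x: "x \<in> S \<ominus> T" and edge: "TAR_edge F S (S \<ominus> {x})"
      using TAR_edge_towards[OF \<open>S \<in> F\<close> \<open>T \<in> F\<close>] by blast
    have "(S \<ominus> {x}) \<ominus> T = (S \<ominus> T) - {x}"
      using x by (auto simp: sym_diff_def)
    then have "card ((S \<ominus> {x}) \<ominus> T) = n"
      using Suc.prems(1) x by simp
    moreover have "S \<ominus> {x} \<in> F"
      using edge by (simp add: TAR_edge_def)
    ultimately have "(TAR_edge F ^^ n) (S \<ominus> {x}) T"
      by (rule Suc.IH)
    then show ?case
      by (rule relpowp_Suc_I2[where P="TAR_edge F", OF edge])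
  qed
  then show ?thesis
    using assms(1) by blast
qed

lemma card_sym_diff_aut_le:
  assumes f: "f \<in> TAR_auts F" and "S \<in> F" and "T \<in> F"
  shows "card (f S \<ominus> f T) \<le> card (S \<ominus> T)"
proof (rule card_sym_diff_le_if_TAR_walk)
  show "(TAR_edge F ^^ card (S \<ominus> T)) (f S) (f T)"
    by (rule relpowp_map[where h=f, OF _ TAR_walk_sym_diff[OF assms(2,3)]])
      (rule TAR_auts_edge[OF f])
  show "f S \<in> F"
    using f \<open>S \<in> F\<close> by (rule TAR_auts_mem)
qed

lemma card_sym_diff_aut:
  assumes f: "f \<in> TAR_auts F" and S: "S \<in> F" and T: "T \<in> F"
  shows "card (f S \<ominus> f T) = card (S \<ominus> T)"
proof (rule antisym)
  show "card (f S \<ominus> f T) \<le> card (S \<ominus> T)"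
    using f S T by (rule card_sym_diff_aut_le)
  define g where "g = inv\<^bsub>BijGroup F\<^esub> f"
  have g: "g \<in> TAR_auts F"
    unfolding g_def using TAR_auts_subgroup f by (rule subgroup.m_inv_closed)
  have "g (f X) = X" if "X \<in> F" for X
    using that f TAR_auts_mem[OF f] bij_betw_inv_into_left[OF TAR_auts_bij[OF f]]
    by (simp add: g_def inv_BijGroup TAR_auts_def)
  then show "card (S \<ominus> T) \<le> card (f S \<ominus> f T)"
    using card_sym_diff_aut_le[OF g TAR_auts_mem[OF f S] TAR_auts_mem[OF f T]] S T
    by simp
qed

lemma irrelevant_if_aut_eq_image_sym_diff:
  assumes f: "f \<in> TAR_auts F" and bij: "bij_betw \<psi> V V" and "R \<subseteq> V"
    and f_eq: "\<And>S. S \<in> F \<Longrightarrow> f S = \<psi> ` S \<ominus> R"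
  shows "irrelevant R"
  unfolding irrelevant_def
proof (intro conjI ballI allI impI notI)
  show "R \<subseteq> V"
    by fact
  fix v M assume v: "v \<in> R" and M: "minimal_set M" and "v \<in> M"
  obtain X where X: "X \<in> F" "f X = M"
    using bij_betw_imp_surj_on[OF TAR_auts_bij[OF f]] minimal_set_mem[OF M] by (metis imageE)
  have "v \<in> \<psi> ` V"
    using bij_betw_imp_surj_on[OF bij] v \<open>R \<subseteq> V\<close> by blast
  then obtain u where u: "u \<in> V" "\<psi> u = v"
    by blast
  have "insert u X \<in> F"
    by (rule up_closed[OF X(1)]) (use u family_subset[OF X(1)] in auto)
  moreover have "f (insert u X) = M - {v}"
  proof -
    have "v \<notin> \<psi> ` X"
      using f_eq[OF X(1)] X(2) v \<open>v \<in> M\<close> by (auto simp: sym_diff_def)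
    have "f (insert u X) = insert v (\<psi> ` X) \<ominus> R"
      using f_eq[OF \<open>insert u X \<in> F\<close>] u(2) by simp
    also have "\<dots> = (\<psi> ` X \<ominus> R) - {v}"
      using v \<open>v \<notin> \<psi> ` X\<close> by (auto simp: sym_diff_def)
    also have "\<psi> ` X \<ominus> R = M"
      using f_eq[OF X(1)] X(2) by simp
    finally show ?thesis .
  qed
  ultimately have "M - {v} \<in> F"
    using TAR_auts_mem[OF f] by metis
  moreover have "M - {v} \<subset> M"
    using \<open>v \<in> M\<close> by blast
  ultimately show False
    using M unfolding minimal_set_def by blast
qed

end

locale Xset_family = up_closed_family +
  assumes V_nonempty: "V \<noteq> {}"
    and co_singleton_mem: "v \<in> V \<Longrightarrow> V - {v} \<in> F"
begin

lemma V_mem: "V \<in> F"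
proof -
  obtain v where "v \<in> V"
    using V_nonempty by blast
  then show ?thesis
    using up_closed[OF co_singleton_mem] by blast
qed

lemma aut_co_singleton:
  assumes f: "f \<in> TAR_auts F" and v: "v \<in> V"
  shows "\<exists>w\<in>V. f (V - {v}) = f V \<ominus> {w}"
proof -
  have "card (f (V - {v}) \<ominus> f V) = card ((V - {v}) \<ominus> V)"
    by (rule card_sym_diff_aut[OF f co_singleton_mem[OF v] V_mem])
  also have "(V - {v}) \<ominus> V = {v}"
    using v by (auto simp: sym_diff_def)
  finally have "card (f (V - {v}) \<ominus> f V) = 1"
    by simp
  then obtain w where w: "f (V - {v}) \<ominus> f V = {w}"
    by (rule card_1_singletonE)
  have "f (V - {v}) \<subseteq> V" "f V \<subseteq> V"
    using TAR_auts_mem[OF f] co_singleton_mem[OF v] V_mem family_subset by auto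
  then have "w \<in> V"
    using w by (auto simp: sym_diff_def)
  moreover have "f (V - {v}) = f V \<ominus> {w}"
    using w by (auto simp: sym_diff_def)
  ultimately show ?thesis
    by blast
qed

lemma aut_sym_diff_mem_iff:
  assumes f: "f \<in> TAR_auts F" and S: "S \<in> F" and v: "v \<in> V"
    and w: "f (V - {v}) = f V \<ominus> {w}"
  shows "w \<in> f S \<ominus> f V \<longleftrightarrow> v \<notin> S"
proof -
  have SV: "S \<subseteq> V"
    using S by (rule family_subset)
  have "card (f S \<ominus> f V) = card (S \<ominus> V)"
    by (rule card_sym_diff_aut[OF f S V_mem])
  also have "S \<ominus> V = V - S"
    using SV by (auto simp: sym_diff_def)
  finally have card_eq: "card (f S \<ominus> f V) = card (V - S)" .
  have "(f S \<ominus> f V) \<ominus> {w} = f S \<ominus> f (V - {v})"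
    unfolding w by (rule sym_diff_assoc)
  then have "card ((f S \<ominus> f V) \<ominus> {w}) = card (S \<ominus> (V - {v}))"
    using card_sym_diff_aut[OF f S co_singleton_mem[OF v]] by simp
  also have "S \<ominus> (V - {v}) = (V - S) \<ominus> {v}"
    using SV v by (auto simp: sym_diff_def)
  finally have "w \<in> f S \<ominus> f V \<longleftrightarrow> v \<in> V - S"
    using card_eq finite_V finite_member TAR_auts_mem[OF f] S V_mem
    by (intro mem_iff_mem_if_card_sym_diff_singleton_eq) (auto simp: sym_diff_def)
  then show ?thesis
    using v by blast
qed

lemma aut_co_singleton_bij:
  assumes f: "f \<in> TAR_auts F"
  obtains \<psi> where "bij_betw \<psi> V V" and "\<And>v. v \<in> V \<Longrightarrow> f (V - {v}) = f V \<ominus> {\<psi> v}"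
proof -
  obtain \<psi> where \<psi>: "\<And>v. v \<in> V \<Longrightarrow> \<psi> v \<in> V \<and> f (V - {v}) = f V \<ominus> {\<psi> v}"
    using aut_co_singleton[OF f] by metis
  have "inj_on \<psi> V"
  proof (rule inj_onI)
    fix u v assume u: "u \<in> V" and v: "v \<in> V" and "\<psi> u = \<psi> v"
    then have "f (V - {u}) = f (V - {v})"
      using \<psi> by simp
    then have "V - {u} = V - {v}"
      using inj_onD[OF bij_betw_imp_inj_on[OF TAR_auts_bij[OF f]]] co_singleton_mem u v by blast
    then show "u = v"
      using u v by blast
  qed
  moreover have "\<psi> ` V = V"
    using endo_inj_surj[OF finite_V _ \<open>inj_on \<psi> V\<close>] \<psi> by blast
  ultimately show thesis
    using that \<psi> by (simp add: bij_betw_def)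
qed

lemma aut_eq_image_sym_diff:
  assumes f: "f \<in> TAR_auts F"
  obtains \<psi> where "bij_betw \<psi> V V" and "\<And>S. S \<in> F \<Longrightarrow> f S = \<psi> ` S \<ominus> (V - f V)"
proof -
  obtain \<psi> where bij: "bij_betw \<psi> V V" and \<psi>: "\<And>v. v \<in> V \<Longrightarrow> f (V - {v}) = f V \<ominus> {\<psi> v}"
    using aut_co_singleton_bij[OF f] by blast
  have \<psi>V: "\<psi> ` V = V"
    using bij by (rule bij_betw_imp_surj_on)
  have "f S = \<psi> ` S \<ominus> (V - f V)" if S: "S \<in> F" for S
  proof -
    have mem_iff: "\<psi> v \<in> f S \<ominus> f V \<longleftrightarrow> v \<notin> S" if "v \<in> V" for v
      using aut_sym_diff_mem_iff[OF f S that \<psi>[OF that]] .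
    have subsets: "S \<subseteq> V" "f S \<subseteq> V" "f V \<subseteq> V"
      using family_subset TAR_auts_mem[OF f] S V_mem by auto
    then have "\<psi> ` S \<subseteq> V"
      using \<psi>V by blast
    have "f S \<ominus> f V = \<psi> ` (V - S)"
    proof (intro equalityI subsetI)
      fix x assume x: "x \<in> f S \<ominus> f V"
      then have "x \<in> \<psi> ` V"
        using subsets \<psi>V by (auto simp: sym_diff_def)
      then show "x \<in> \<psi> ` (V - S)"
        using mem_iff x by blast
    qed (use mem_iff in blast)
    also have "\<psi> ` (V - S) = V - \<psi> ` S"
      using inj_on_image_set_diff[OF bij_betw_imp_inj_on[OF bij]] subsets \<psi>V by auto
    finally show ?thesis
      using subsets \<open>\<psi> ` S \<subseteq> V\<close> by (auto simp: sym_diff_def)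
  qed
  then show thesis
    using that bij by blast
qed

lemma aut_decomposition:
  assumes f: "f \<in> TAR_auts F"
  obtains \<psi> R where "bij_betw \<psi> V V" and "\<And>S. S \<in> F \<Longrightarrow> \<psi> ` S \<in> F"
    and "irrelevant R" and "\<And>S. S \<in> F \<Longrightarrow> f S = \<psi> ` S \<ominus> R"
proof -
  obtain \<psi> where bij: "bij_betw \<psi> V V" and f_eq: "\<And>S. S \<in> F \<Longrightarrow> f S = \<psi> ` S \<ominus> (V - f V)"
    using aut_eq_image_sym_diff[OF f] by blast
  have R: "irrelevant (V - f V)"
    using f bij by (rule irrelevant_if_aut_eq_image_sym_diff) (use f_eq in auto)
  have "\<psi> ` S \<in> F" if "S \<in> F" for S
    using sym_diff_irrelevant_mem[OF R TAR_auts_mem[OF f that]] f_eq[OF that]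
    by (simp add: sym_diff_cancel_right)
  then show thesis
    using that bij R f_eq by blast
qed

theorem TAR_auts_eq_generate:
  "TAR_auts F = generate (BijGroup F)
     ({(\<lambda>S\<in>F. S \<ominus> R) | R. irrelevant R} \<union>
      {(\<lambda>S\<in>F. \<psi> ` S) | \<psi>. bij_betw \<psi> V V \<and> (\<forall>S\<in>F. \<psi> ` S \<in> F)})"
  (is "_ = generate _ ?gens")
proof
  have "?gens \<subseteq> TAR_auts F"
    using sym_diff_aut image_aut by blast
  then show "generate (BijGroup F) ?gens \<subseteq> TAR_auts F"
    by (rule group.generate_subgroup_incl[OF group_BijGroup _ TAR_auts_subgroup])
  show "TAR_auts F \<subseteq> generate (BijGroup F) ?gens"
  proof
    fix f assume f: "f \<in> TAR_auts F"
    obtain \<psi> R where bij: "bij_betw \<psi> V V" and into: "\<And>S. S \<in> F \<Longrightarrow> \<psi> ` S \<in> F"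
      and R: "irrelevant R" and f_eq: "\<And>S. S \<in> F \<Longrightarrow> f S = \<psi> ` S \<ominus> R"
      using aut_decomposition[OF f] by blast
    define \<nu> where "\<nu> = (\<lambda>S\<in>F. S \<ominus> R)"
    define \<pi> where "\<pi> = (\<lambda>S\<in>F. \<psi> ` S)"
    have gens: "\<nu> \<in> ?gens" "\<pi> \<in> ?gens"
      unfolding \<nu>_def \<pi>_def using R bij into by blast+
    have "\<nu> \<in> Bij F" "\<pi> \<in> Bij F"
      unfolding \<nu>_def \<pi>_def using sym_diff_aut[OF R] image_aut[OF bij into]
      by (auto simp: TAR_auts_def)
    then have "\<nu> \<otimes>\<^bsub>BijGroup F\<^esub> \<pi> = compose F \<nu> \<pi>"
      by (simp add: BijGroup_def)
    also have "\<dots> = f"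
    proof (rule extensionalityI[OF compose_extensional])
      show "f \<in> extensional F"
        using f by (auto simp: TAR_auts_def Bij_def)
      fix S assume "S \<in> F"
      then show "compose F \<nu> \<pi> S = f S"
        using into f_eq by (simp add: compose_eq \<nu>_def \<pi>_def)
    qed
    moreover have "\<nu> \<otimes>\<^bsub>BijGroup F\<^esub> \<pi> \<in> generate (BijGroup F) ?gens"
      using gens by (intro generate.eng generate.incl)
    ultimately show "f \<in> generate (BijGroup F) ?gens"
      by simp
  qed
qed

end

lemma (in up_closed_family) TAR_generators_eq:
  assumes F: "Xs V E = F"
  shows "TAR_generators Xs V E =
    {(\<lambda>S\<in>F. S \<ominus> R) | R. irrelevant R} \<union>
    {(\<lambda>S\<in>F. \<psi> ` S) | \<psi>. bij_betw \<psi> V V \<and> (\<forall>S\<in>F. \<psi> ` S \<in> F)}"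
proof -
  have minimal: "minimal_Xset Xs V E = minimal_set"
    by (intro ext) (simp only: minimal_Xset_def minimal_set_def F)
  have irrelevant: "X_irrelevant Xs V E = irrelevant"
    by (intro ext) (simp only: X_irrelevant_def irrelevant_def minimal)
  have M_X: "\<psi> \<in> M_X Xs V E \<longleftrightarrow> bij_betw \<psi> V V \<and> (\<forall>S\<in>F. \<psi> ` S \<in> F)" for \<psi>
  proof (cases "bij_betw \<psi> V V")
    case True
    have "card (\<psi> ` M) = card M" if "minimal_set M" for M
      using family_subset[OF minimal_set_mem[OF that]]
      by (intro card_image inj_on_subset[OF bij_betw_imp_inj_on[OF True]])
    then show ?thesis
      using bij_preserves_minimal_iff[OF True] by (auto simp: M_X_def minimal)
  qed (simp add: M_X_def)
  show ?thesis
    unfolding TAR_generators_def irrelevant M_X F ..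
qed

lemma Xset_family_of_graph:
  assumes "X_set_property Xs" and graph: "is_graph V E" and "no_isolated V E"
  shows "Xset_family V (Xs V E)"
proof -
  note X_sets = assms(1)[unfolded X_set_property_def, rule_format, OF graph]
  show ?thesis
  proof
    show "finite V" "V \<noteq> {}"
      using graph by (simp_all add: is_graph_def)
    show "S \<subseteq> V" if "S \<in> Xs V E" for S
      using X_sets that by blast
    show "T \<in> Xs V E" if "S \<in> Xs V E" "S \<subseteq> T" "T \<subseteq> V" for S T
      using X_sets that by blast
    show "V - {v} \<in> Xs V E" if "v \<in> V" for v
      using X_sets that assms(3) by blast
  qed
qed

theorem theorem2p18:
  fixes Xs :: "'a set \<Rightarrow> ('a \<Rightarrow> 'a \<Rightarrow> bool) \<Rightarrow> 'a set set"
    and V :: "'a set" and E :: "'a \<Rightarrow> 'a \<Rightarrow> bool"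
  assumes "X_set_property Xs"
    and "is_graph V E"
    and "no_isolated V E"
  shows "TAR_auts (Xs V E) = generate (BijGroup (Xs V E)) (TAR_generators Xs V E)"
proof -
  interpret Xset_family V "Xs V E"
    using assms by (rule Xset_family_of_graph)
  show ?thesis
    unfolding TAR_generators_eq[where Xs=Xs and E=E, OF refl] by (rule TAR_auts_eq_generate)
qed

end
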